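(* Let $K$ be a finite oriented simplicial complex and let $p,q$ be integers with $0\le p\le q$. Fix the bases of $C_m(K)$ given by the oriented $m$-simplices, and for integers $m\ge k\ge 0$ let $B_{m,k}=(b^{(m,k)}_{ij})$ be the matrix of $\partial_{m,k}\colon C_m(K)\to C_{m-k}(K)$ in these bases (rows indexed by $(m-k)$-simplices, columns by $m$-simplices). Then for every $q$-simplex $\sigma_j^{(q)}$, $$\deg_L^p(\sigma_j^{(q)})= -1+\sum_{q'=p}^{\dim K}\sum_k\min\Big(1,\sum_{i}|b_{ij}^{(q,h)}|\,|b^{(q',h')}_{ik}|\Big),$$ where $h=q-p$, $h'=q'-p$, $i$ runs over the $p$-simplices and $k$ over the $q'$-simplices of $K$.
   Context: $K$ is a finite abstract simplicial complex (finite family of nonempty finite vertex sets closed under nonempty subsets); a $q$-simplex has $q+1$ vertices; a face is a simplex of $K$ contained in a given simplex (a simplex is a face of itself); $\dim K$ is the maximal dimension of a simplex. Orientations: orderings of vertices modulo even permutations, $[v_{\eta(0)},\dots,v_{\eta(m)}]=\operatorname{sign}(\eta)[v_0,\dots,v_m]$; each simplex has a fixed orientation; $C_m(K)$ is the real vector space with basis the oriented $m$-simplices (opposite orientation = negative). Multi-parameter boundary operator: for $m\ge k\ge0$, $\partial_{m,k}\colon C_m(K)\to C_{m-k}(K)$ is linear with $\partial_{m,k}([v_{\eta(0)},\dots,v_{\eta(m)}])=\sum_{J}\operatorname{sign}(\eta)\operatorname{sign}(\epsilon_J)[v_0,\dots,\widehat{v_{j_1}},\dots,\widehat{v_{j_k}},\dots,v_m]$,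 summing over subsets $J=\{j_1<\dots<j_k\}\subseteq\{0,\dots,m\}$ (hatted vertices removed, others in increasing order), $\epsilon_J$ the permutation of $\{0,\dots,m\}$ with $r\mapsto j_{r+1}$ for $r<k$ and $k,\dots,m$ mapped increasingly onto the complement of $J$. In particular $\partial_{m,0}$ is the identity, and the entry $b^{(m,k)}_{ij}$ is $\pm1$ if the $i$-th $(m-k)$-simplex is a face of the $j$-th $m$-simplex and $0$ otherwise. $p$-lower adjacency: two simplices are $p$-lower adjacent if they have a common $p$-face. The $p$-lower degree $\deg_L^p(\sigma^{(q)})$ is the number of simplices of $K$ (of any dimension), other than $\sigma^{(q)}$ itself, that are $p$-lower adjacent to $\sigma^{(q)}$ (a simplex is not considered $p$-lower adjacent to itself). *)

theory Defs
  imports Complex_Main "HOL-Combinatorics.Permutations"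
begin

definition simplicial_complex :: "'a set set \<Rightarrow> bool" where
  "simplicial_complex K \<longleftrightarrow> finite K \<and>
     (\<forall>s\<in>K. s \<noteq> {} \<and> finite s) \<and>
     (\<forall>s\<in>K. \<forall>t. t \<noteq> {} \<and> t \<subseteq> s \<longrightarrow> t \<in> K)"

definition oriented :: "'a set set \<Rightarrow> ('a set \<Rightarrow> 'a list) \<Rightarrow> bool" where
  "oriented K ord \<longleftrightarrow> (\<forall>s\<in>K. distinct (ord s) \<and> set (ord s) = s)"

definition simplices :: "'a set set \<Rightarrow> nat \<Rightarrow> 'a set set" where
  "simplices K m = {s\<in>K. card s = m + 1}"

definition dimK :: "'a set set \<Rightarrow> nat" where
  "dimK K = Max ((\<lambda>s. card s - 1) ` K)"

definition list_perm :: "'a list \<Rightarrow> 'a list \<Rightarrow> nat \<Rightarrow> nat" where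
  "list_perm xs ys i = (if i < length ys then (THE j. j < length xs \<and> xs ! j = ys ! i) else i)"

text \<open>Sign of the reordering ys of the vertex list xs, i.e. [ys] = list_sign xs ys [xs].\<close>
definition list_sign :: "'a list \<Rightarrow> 'a list \<Rightarrow> real" where
  "list_sign xs ys = sign (list_perm xs ys)"

text \<open>For sigma = [v_0,...,v_m] (its fixed orientation) and J the removed vertices, the term is
  sign(eps_J) [remaining vertices in order]; since [v_{j_1},...,v_{j_k}, remaining] =
  sign(eps_J)[v_0..v_m] and the remaining list is a reordering of ord tau, the coefficient
  of the oriented simplex tau is the sign of the reordering
  (removed vertices in order) @ (ord tau) of ord sigma.\<close>
definition bnd :: "'a set set \<Rightarrow> ('a set \<Rightarrow> 'a list) \<Rightarrow> nat \<Rightarrow> nat \<Rightarrow> 'a set \<Rightarrow> 'a set \<Rightarrow> real" where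
  "bnd K ord m k \<tau> \<sigma> =
     (if \<sigma> \<in> simplices K m \<and> \<tau> \<in> simplices K (m - k) \<and> k \<le> m \<and> \<tau> \<subseteq> \<sigma>
      then list_sign (ord \<sigma>) (filter (\<lambda>v. v \<notin> \<tau>) (ord \<sigma>) @ ord \<tau>)
      else 0)"

definition lower_adj :: "'a set set \<Rightarrow> nat \<Rightarrow> 'a set \<Rightarrow> 'a set \<Rightarrow> bool" where
  "lower_adj K p s t \<longleftrightarrow> (\<exists>f\<in>simplices K p. f \<subseteq> s \<and> f \<subseteq> t)"

definition lower_degree :: "'a set set \<Rightarrow> nat \<Rightarrow> 'a set \<Rightarrow> nat" where
  "lower_degree K p s = card {t\<in>K. t \<noteq> s \<and> lower_adj K p s t}"

end

theory Submission
  imports Defs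
begin

text \<open>Only the absolute values of the boundary coefficients enter: they are incidence indicators,
  so the inner sum counts the common \<open>p\<close>-faces of \<open>\<sigma>\<close> and \<open>\<tau>\<close>, and its minimum with 1 is the
  indicator of \<open>p\<close>-lower adjacency. Every simplex having a \<open>p\<close>-face has dimension between \<open>p\<close>
  and \<open>dim K\<close>, so the double sum counts the simplices \<open>p\<close>-lower adjacent to \<open>\<sigma>\<close>; this count
  includes \<open>\<sigma>\<close> itself, which explains the \<open>-1\<close>.\<close>

lemma abs_list_sign: "\<bar>list_sign xs ys\<bar> = 1"
  unfolding list_sign_def sign_def by simp

lemma abs_bnd:
  "\<bar>bnd K ord m k \<tau> \<sigma>\<bar> =
    (if \<sigma> \<in> simplices K m \<and> \<tau> \<in> simplices K (m - k) \<and> k \<le> m \<and> \<tau> \<subseteq> \<sigma> then 1 else 0)"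
  unfolding bnd_def by (simp add: abs_list_sign)

lemma simplicial_complex_finite: "simplicial_complex K \<Longrightarrow> finite K"
  unfolding simplicial_complex_def by simp

lemma finite_simplices: "finite K \<Longrightarrow> finite (simplices K m)"
  unfolding simplices_def by simp

lemma disjoint_simplices: "m \<noteq> n \<Longrightarrow> simplices K m \<inter> simplices K n = {}"
  unfolding simplices_def by auto

lemma sum_abs_bnd_mult_eq_card_common_faces:
  assumes "finite K" and "p \<le> q" and "\<sigma> \<in> simplices K q" and "p \<le> q'" and "\<tau> \<in> simplices K q'"
  shows "(\<Sum>i\<in>simplices K p. \<bar>bnd K ord q (q - p) i \<sigma>\<bar> * \<bar>bnd K ord q' (q' - p) i \<tau>\<bar>)
    = real (card {f\<in>simplices K p. f \<subseteq> \<sigma> \<and> f \<subseteq> \<tau>})"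
proof -
  have "(\<Sum>i\<in>simplices K p. \<bar>bnd K ord q (q - p) i \<sigma>\<bar> * \<bar>bnd K ord q' (q' - p) i \<tau>\<bar>)
      = (\<Sum>i\<in>simplices K p. if i \<subseteq> \<sigma> \<and> i \<subseteq> \<tau> then 1 else 0)"
    using assms by (intro sum.cong) (auto simp: abs_bnd)
  also have "\<dots> = real (card {f\<in>simplices K p. f \<subseteq> \<sigma> \<and> f \<subseteq> \<tau>})"
    using assms(1) by (simp add: sum.If_cases finite_simplices Int_def conj_commute)
  finally show ?thesis .
qed

lemma min_one_card_common_faces:
  assumes "finite K" and "\<tau> \<in> K"
  shows "min 1 (real (card {f\<in>simplices K p. f \<subseteq> \<sigma> \<and> f \<subseteq> \<tau>}))
    = (if lower_adj K p \<sigma> \<tau> then 1 else 0)"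
proof (cases "lower_adj K p \<sigma> \<tau>")
  case True
  then have "{f\<in>simplices K p. f \<subseteq> \<sigma> \<and> f \<subseteq> \<tau>} \<noteq> {}"
    unfolding lower_adj_def by auto
  then have "card {f\<in>simplices K p. f \<subseteq> \<sigma> \<and> f \<subseteq> \<tau>} \<ge> 1"
    using finite_simplices[OF assms(1), of p] by (simp add: Suc_le_eq card_gt_0_iff)
  with True show ?thesis by simp
next
  case False
  then have "{f\<in>simplices K p. f \<subseteq> \<sigma> \<and> f \<subseteq> \<tau>} = {}"
    unfolding lower_adj_def by auto
  with False show ?thesis by (simp only: card.empty) simp
qed

lemma min_one_sum_abs_bnd_mult_eq_lower_adj:
  assumes "finite K" and "p \<le> q" and "\<sigma> \<in> simplices K q" and "p \<le> q'" and "\<tau> \<in> simplices K q'"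
  shows "min 1 (\<Sum>i\<in>simplices K p. \<bar>bnd K ord q (q - p) i \<sigma>\<bar> * \<bar>bnd K ord q' (q' - p) i \<tau>\<bar>)
    = (if lower_adj K p \<sigma> \<tau> then 1 else 0)"
proof -
  have "\<tau> \<in> K"
    using assms(5) unfolding simplices_def by simp
  with assms show ?thesis
    by (simp add: sum_abs_bnd_mult_eq_card_common_faces min_one_card_common_faces)
qed

lemma lower_adj_in_simplices_between:
  assumes "simplicial_complex K" and "\<tau> \<in> K" and "lower_adj K p \<sigma> \<tau>"
  shows "\<tau> \<in> (\<Union>q'\<in>{p..dimK K}. simplices K q')"
proof -
  have finK: "finite K" and "finite \<tau>"
    using assms(1,2) unfolding simplicial_complex_def by auto
  obtain f where f: "f \<in> simplices K p" "f \<subseteq> \<tau>"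
    using assms(3) unfolding lower_adj_def by auto
  have "card f \<le> card \<tau>"
    using f(2) \<open>finite \<tau>\<close> by (rule card_mono[rotated])
  with f(1) have "p + 1 \<le> card \<tau>"
    unfolding simplices_def by simp
  then have "p \<le> card \<tau> - 1" and "\<tau> \<in> simplices K (card \<tau> - 1)"
    using assms(2) unfolding simplices_def by auto
  moreover have "card \<tau> - 1 \<le> dimK K"
    unfolding dimK_def using assms(2) finK by (intro Max_ge) simp_all
  ultimately show ?thesis
    by auto
qed

lemma lower_adj_refl:
  assumes "simplicial_complex K" and "p \<le> q" and "\<sigma> \<in> simplices K q"
  shows "lower_adj K p \<sigma> \<sigma>"
proof -
  have "\<sigma> \<in> K" and "card \<sigma> = q + 1"
    using assms(3) unfolding simplices_def by auto
  with assms(2) have "p + 1 \<le> card \<sigma>"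
    by simp
  then obtain f where f: "f \<subseteq> \<sigma>" "card f = p + 1"
    using obtain_subset_with_card_n by blast
  then have "f \<noteq> {}"
    by auto
  with f(1) have "f \<in> K"
    using assms(1) \<open>\<sigma> \<in> K\<close> unfolding simplicial_complex_def by blast
  with f(2) have "f \<in> simplices K p"
    unfolding simplices_def by simp
  with f(1) show ?thesis
    unfolding lower_adj_def by blast
qed

lemma card_lower_adj_eq_Suc_lower_degree:
  assumes "simplicial_complex K" and "p \<le> q" and "\<sigma> \<in> simplices K q"
  shows "card {\<tau>\<in>K. lower_adj K p \<sigma> \<tau>} = Suc (lower_degree K p \<sigma>)"
proof -
  have "\<sigma> \<in> K"
    using assms(3) unfolding simplices_def by auto
  with lower_adj_refl[OF assms] have
    "{\<tau>\<in>K. lower_adj K p \<sigma> \<tau>} = insert \<sigma> {\<tau>\<in>K. \<tau> \<noteq> \<sigma> \<and> lower_adj K p \<sigma> \<tau>}"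
    by auto
  moreover have "finite K"
    using assms(1) by (rule simplicial_complex_finite)
  ultimately show ?thesis
    unfolding lower_degree_def by simp
qed

lemma sum_simplices_lower_adj_indicator:
  assumes "simplicial_complex K"
  shows "(\<Sum>q'\<in>{p..dimK K}. \<Sum>\<tau>\<in>simplices K q'. if lower_adj K p \<sigma> \<tau> then 1 else 0)
    = real (card {\<tau>\<in>K. lower_adj K p \<sigma> \<tau>})"
proof -
  let ?S = "\<Union>q'\<in>{p..dimK K}. simplices K q'"
  have finK: "finite K"
    using assms by (rule simplicial_complex_finite)
  have adjacent_in_S: "{\<tau>\<in>?S. lower_adj K p \<sigma> \<tau>} = {\<tau>\<in>K. lower_adj K p \<sigma> \<tau>}"
    using lower_adj_in_simplices_between[OF assms] by (auto simp: simplices_def)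
  have "(\<Sum>q'\<in>{p..dimK K}. \<Sum>\<tau>\<in>simplices K q'. if lower_adj K p \<sigma> \<tau> then 1 else 0)
      = (\<Sum>\<tau>\<in>?S. if lower_adj K p \<sigma> \<tau> then 1 else 0)"
    using finK by (intro sum.UNION_disjoint[symmetric]) (auto simp: finite_simplices disjoint_simplices)
  also have "\<dots> = real (card {\<tau>\<in>K. lower_adj K p \<sigma> \<tau>})"
    using finK adjacent_in_S by (simp add: sum.If_cases finite_simplices Int_def conj_commute)
  finally show ?thesis .
qed

theorem theoremt:
  fixes K :: "'a set set" and ord :: "'a set \<Rightarrow> 'a list" and p q :: nat and \<sigma> :: "'a set"
  assumes "simplicial_complex K" and "oriented K ord" and "p \<le> q" and "\<sigma> \<in> simplices K q"
  shows "real (lower_degree K p \<sigma>) =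
    -1 + (\<Sum>q'\<in>{p..dimK K}. \<Sum>\<tau>\<in>simplices K q'.
           min 1 (\<Sum>i\<in>simplices K p. \<bar>bnd K ord q (q - p) i \<sigma>\<bar> * \<bar>bnd K ord q' (q' - p) i \<tau>\<bar>))"
proof -
  have finK: "finite K"
    using assms(1) by (rule simplicial_complex_finite)
  have "(\<Sum>q'\<in>{p..dimK K}. \<Sum>\<tau>\<in>simplices K q'.
           min 1 (\<Sum>i\<in>simplices K p. \<bar>bnd K ord q (q - p) i \<sigma>\<bar> * \<bar>bnd K ord q' (q' - p) i \<tau>\<bar>))
      = (\<Sum>q'\<in>{p..dimK K}. \<Sum>\<tau>\<in>simplices K q'. if lower_adj K p \<sigma> \<tau> then 1 else 0)"
    using finK assms(3,4) by (intro sum.cong refl) (simp add: min_one_sum_abs_bnd_mult_eq_lower_adj)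
  also have "\<dots> = real (card {\<tau>\<in>K. lower_adj K p \<sigma> \<tau>})"
    using assms(1) by (rule sum_simplices_lower_adj_indicator)
  also have "\<dots> = real (lower_degree K p \<sigma>) + 1"
    using card_lower_adj_eq_Suc_lower_degree[OF assms(1,3,4)] by simp
  finally show ?thesis
    by simp
qed

end
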